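(* Let $n>1$ be an odd perfect square. Then $D_{S(n)^*}=5$.
   Context: For a natural number $n$, $\mathbb Z_n=\mathbb Z/n\mathbb Z$, $S(n)=\{x^2:x\in\mathbb Z_n\}$, $S(n)^*=S(n)\setminus\{0\}$. For $A\subseteq\mathbb Z_n$, a sequence $(y_1,\dots,y_t)$ ($t\ge1$) in $\mathbb Z_n$ is an $A$-weighted zero-sum sequence if there exist $a_1,\dots,a_t\in A$ with $\sum a_iy_i=0$; a sequence has an $A$-weighted zero-sum subsequence if some nonempty subsequence is an $A$-weighted zero-sum sequence. $D_A(n)$ is the least positive integer $t$ such that every sequence of length $t$ in $\mathbb Z_n$ has an $A$-weighted zero-sum subsequence; $D_{S(n)^*}=D_{S(n)^*}(n)$. *)

theory Defs
  imports Main "HOL-Library.Sublist"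
begin

definition Zn :: "nat \<Rightarrow> int set" where
  "Zn n = {0..<int n}"

definition sq_set :: "nat \<Rightarrow> int set" where
  "sq_set n = {(x^2) mod int n | x. x \<in> Zn n}"

definition sq_set_star :: "nat \<Rightarrow> int set" where
  "sq_set_star n = sq_set n - {0}"

definition weighted_zero_sum :: "nat \<Rightarrow> int set \<Rightarrow> int list \<Rightarrow> bool" where
  "weighted_zero_sum n A ys \<longleftrightarrow> ys \<noteq> [] \<and>
     (\<exists>as. length as = length ys \<and> set as \<subseteq> A \<and>
        (\<Sum>i<length ys. as ! i * ys ! i) mod int n = 0)"

definition has_wzs_subseq :: "nat \<Rightarrow> int set \<Rightarrow> int list \<Rightarrow> bool" where
  "has_wzs_subseq n A ys \<longleftrightarrow> (\<exists>zs. subseq zs ys \<and> weighted_zero_sum n A zs)"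

definition weighted_davenport :: "nat \<Rightarrow> int set \<Rightarrow> nat" where
  "weighted_davenport n A = (LEAST t. t > 0 \<and>
     (\<forall>ys. length ys = t \<and> set ys \<subseteq> Zn n \<longrightarrow> has_wzs_subseq n A ys))"

end

theory Submission
  imports Defs "HOL-Number_Theory.Number_Theory"
begin

(* Write n = m^2. A subsequence with nonzero square weights is the same as a weight function on
   the whole sequence with values in S(n) \<union> {0}, not all zero.

   Upper bound: pick a prime p dividing m. Of five terms, one is divisible by p^2, or three are
   units mod p, or three are divisible by p exactly. A diagonal ternary form with unit
   coefficients has a zero mod p with a unit coordinate (a x^2 and -c - b y^2 each take
   (p+1)/2 values), which Hensel's lemma lifts to p^2; for terms divisible by p exactly a zero
   mod p of the reduced form is already a zero mod p^2. Multiplying all weights x by m/p turns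
   the zero sum mod p^2 with weights x^2 into one mod m^2.

   Lower bound: by the Chinese remainder theorem choose C and R such that for every prime p
   dividing m, -C is a non-residue mod p and R = p mod p^2. Then the form
   x1^2 + C x2^2 + R (x3^2 + C x4^2) is anisotropic at p: a zero mod p^2 forces p to divide
   every x_i, and descent gives m | x_i whenever m^2 divides the form. Hence the sequence
   1, C, R, RC admits no nonzero square weights. *)

section \<open>Weighted zero sums as weight functions\<close>

lemma weighted_sum_Cons:
  fixes w :: "nat \<Rightarrow> 'a::semiring_0"
  shows "(\<Sum>i<length (y # ys). w i * (y # ys) ! i) = w 0 * y + (\<Sum>i<length ys. w (Suc i) * ys ! i)"
  by (simp only: length_Cons sum.lessThan_Suc_shift) simp

lemma weighted_sum_eq_sum_list_zip:
  fixes ws ys :: "'a::semiring_0 list"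
  assumes "length ws = length ys"
  shows "(\<Sum>i<length ys. ws ! i * ys ! i) = sum_list (map (\<lambda>(w, y). w * y) (zip ws ys))"
  using assms by (simp add: sum_list_sum_nth atLeast0LessThan)

lemma image_case_nat_lessThan: "case_nat a b ` {..<Suc n} = insert a (b ` {..<n})"
  by (simp add: lessThan_Suc_eq_insert_0 image_image)

lemma subseq_weights_extend:
  fixes as zs ys :: "'a::semiring_0 list"
  assumes "subseq zs ys" "length as = length zs"
  shows "\<exists>b. (\<forall>i<length ys. b i \<in> insert 0 (set as)) \<and> set as \<subseteq> b ` {..<length ys}
    \<and> (\<Sum>i<length zs. as ! i * zs ! i) = (\<Sum>i<length ys. b i * ys ! i)"
  using assms
proof (induction arbitrary: as rule: list_emb.induct)
  case (list_emb_Nil ys)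
  then show ?case by (intro exI[of _ "\<lambda>_. 0"]) auto
next
  case (list_emb_Cons zs ys y)
  then obtain b where "\<forall>i<length ys. b i \<in> insert 0 (set as)" "set as \<subseteq> b ` {..<length ys}"
    "(\<Sum>i<length zs. as ! i * zs ! i) = (\<Sum>i<length ys. b i * ys ! i)"
    by blast
  moreover have "(\<Sum>i<length (y # ys). case_nat 0 b i * (y # ys) ! i) = (\<Sum>i<length ys. b i * ys ! i)"
    by (simp only: weighted_sum_Cons) simp
  ultimately show ?case
    using image_case_nat_lessThan[of 0 b "length ys"]
    by (intro exI[of _ "case_nat 0 b"]) (auto simp: less_Suc_eq_0_disj)
next
  case (list_emb_Cons2 z y zs ys)
  then obtain a as' where as: "as = a # as'" "length as' = length zs" by (cases as) auto
  with list_emb_Cons2.IH obtain b where "\<forall>i<length ys. b i \<in> insert 0 (set as')"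
    "set as' \<subseteq> b ` {..<length ys}"
    "(\<Sum>i<length zs. as' ! i * zs ! i) = (\<Sum>i<length ys. b i * ys ! i)"
    by blast
  moreover have "(\<Sum>i<length (y # ys). case_nat a b i * (y # ys) ! i) = a * y + (\<Sum>i<length ys. b i * ys ! i)"
    "(\<Sum>i<length (z # zs). as ! i * (z # zs) ! i) = a * z + (\<Sum>i<length zs. as' ! i * zs ! i)"
    using as(1) by (simp_all only: weighted_sum_Cons) simp_all
  ultimately show ?case
    using as(1) list_emb_Cons2.hyps image_case_nat_lessThan[of a b "length ys"]
    by (intro exI[of _ "case_nat a b"]) (auto simp: less_Suc_eq_0_disj)
qed

lemma subseq_of_nonzero_weights:
  fixes ys :: "'a::semiring_0 list"
  obtains zs as where "subseq zs ys" "length as = length zs" "set as \<subseteq> b ` {..<length ys} - {0}"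
    "(\<exists>i<length ys. b i \<noteq> 0) \<Longrightarrow> zs \<noteq> []"
    "(\<Sum>i<length zs. as ! i * zs ! i) = (\<Sum>i<length ys. b i * ys ! i)"
proof -
  define ws where "ws = map b [0..<length ys]"
  define ps where "ps = filter (\<lambda>(w, _). w \<noteq> 0) (zip ws ys)"
  define zs where "zs = map snd ps"
  define as where "as = map fst ps"
  have ws: "length ws = length ys" "\<And>j. j < length ys \<Longrightarrow> ws ! j = b j"
    by (simp_all add: ws_def)
  have "subseq zs ys"
    using subseq_map[OF subseq_filter_left, of snd _ "zip ws ys"] ws(1) by (simp add: zs_def ps_def)
  moreover have "set as \<subseteq> b ` {..<length ys} - {0}"
  proof
    fix w assume "w \<in> set as"
    then obtain y where "(w, y) \<in> set ps"
      by (auto simp: as_def)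
    then have "w \<noteq> 0" "w \<in> set ws"
      by (auto simp: ps_def dest: set_zip_leftD)
    then show "w \<in> b ` {..<length ys} - {0}"
      by (auto simp: ws_def)
  qed
  moreover have "zs \<noteq> []" if "i < length ys" "b i \<noteq> 0" for i
  proof -
    have "(b i, ys ! i) \<in> set (zip ws ys)"
      using that(1) ws by (auto simp: set_zip intro!: exI[of _ i])
    then have "(b i, ys ! i) \<in> set ps"
      using that(2) by (simp add: ps_def)
    then show ?thesis
      by (auto simp: zs_def)
  qed
  moreover have "(\<Sum>j<length zs. as ! j * zs ! j) = (\<Sum>j<length ys. b j * ys ! j)"
  proof -
    have "(\<Sum>j<length zs. as ! j * zs ! j) = sum_list (map (\<lambda>(w, y). w * y) (zip as zs))"
      by (rule weighted_sum_eq_sum_list_zip) (simp add: as_def zs_def)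
    also have "\<dots> = sum_list (map (\<lambda>(w, y). w * y) ps)"
      by (simp add: as_def zs_def zip_map_fst_snd)
    also have "\<dots> = sum_list (map (\<lambda>(w, y). w * y) (zip ws ys))"
      unfolding ps_def by (rule sum_list_map_filter) auto
    also have "\<dots> = (\<Sum>j<length ys. b j * ys ! j)"
      by (simp add: weighted_sum_eq_sum_list_zip[OF ws(1), symmetric] ws(2))
    finally show ?thesis .
  qed
  moreover have "length as = length zs"
    by (simp add: as_def zs_def)
  ultimately show ?thesis
    using that by blast
qed

lemma has_wzs_subseq_iff_weights:
  assumes "0 \<notin> A"
  shows "has_wzs_subseq n A ys \<longleftrightarrow> (\<exists>b. (\<forall>i<length ys. b i \<in> insert 0 A)
    \<and> (\<exists>i<length ys. b i \<noteq> 0) \<and> (\<Sum>i<length ys. b i * ys ! i) mod int n = 0)"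
proof
  assume "has_wzs_subseq n A ys"
  then obtain zs where zs_sub: "subseq zs ys" and "weighted_zero_sum n A zs"
    unfolding has_wzs_subseq_def by blast
  then obtain as where zs: "zs \<noteq> []" "length as = length zs" "set as \<subseteq> A"
    "(\<Sum>i<length zs. as ! i * zs ! i) mod int n = 0"
    unfolding weighted_zero_sum_def by meson
  then obtain b where b: "\<forall>i<length ys. b i \<in> insert 0 (set as)" "set as \<subseteq> b ` {..<length ys}"
    "(\<Sum>i<length zs. as ! i * zs ! i) = (\<Sum>i<length ys. b i * ys ! i)"
    using subseq_weights_extend[OF zs_sub zs(2)] by blast
  have "as ! 0 \<in> b ` {..<length ys}"
    using zs(1,2) b(2) by (simp add: subset_iff)
  then obtain i where i: "i < length ys" "b i = as ! 0"
    by auto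
  have "b i \<noteq> 0"
    using i(2) zs(1-3) assms by (metis length_greater_0_conv nth_mem subsetD)
  moreover have "\<forall>i<length ys. b i \<in> insert 0 A"
    using b(1) zs(3) by auto
  moreover have "(\<Sum>i<length ys. b i * ys ! i) mod int n = 0"
    using b(3) zs(4) by simp
  ultimately show "\<exists>b. (\<forall>i<length ys. b i \<in> insert 0 A) \<and> (\<exists>i<length ys. b i \<noteq> 0)
    \<and> (\<Sum>i<length ys. b i * ys ! i) mod int n = 0"
    using i(1) by auto
next
  assume "\<exists>b. (\<forall>i<length ys. b i \<in> insert 0 A) \<and> (\<exists>i<length ys. b i \<noteq> 0)
    \<and> (\<Sum>i<length ys. b i * ys ! i) mod int n = 0"
  then obtain b where b: "\<forall>i<length ys. b i \<in> insert 0 A" "\<exists>i<length ys. b i \<noteq> 0"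
    and sum: "(\<Sum>i<length ys. b i * ys ! i) mod int n = 0"
    by meson
  obtain zs as where "subseq zs ys" "length as = length zs" "set as \<subseteq> b ` {..<length ys} - {0}"
    "(\<exists>i<length ys. b i \<noteq> 0) \<Longrightarrow> zs \<noteq> []"
    "(\<Sum>i<length zs. as ! i * zs ! i) = (\<Sum>i<length ys. b i * ys ! i)"
    using subseq_of_nonzero_weights[of ys b] by blast
  moreover note b(2)
  moreover have "b ` {..<length ys} - {0} \<subseteq> A"
    using b(1) by auto
  ultimately show "has_wzs_subseq n A ys"
    using sum unfolding has_wzs_subseq_def weighted_zero_sum_def
    by (intro exI[of _ zs] conjI exI[of _ as]) auto
qed

lemma has_wzs_subseq_mono:
  assumes "has_wzs_subseq n A ys" "subseq ys zs"
  shows "has_wzs_subseq n A zs"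
  using assms subseq_order.trans unfolding has_wzs_subseq_def by blast

lemma weighted_davenport_eqI:
  assumes all: "\<forall>ys. length ys = Suc t \<and> set ys \<subseteq> Zn n \<longrightarrow> has_wzs_subseq n A ys"
    and zs: "length zs = t" "set zs \<subseteq> Zn n" "\<not> has_wzs_subseq n A zs"
  shows "weighted_davenport n A = Suc t"
  unfolding weighted_davenport_def
proof (rule Least_equality)
  fix s assume s: "0 < s \<and> (\<forall>ys. length ys = s \<and> set ys \<subseteq> Zn n \<longrightarrow> has_wzs_subseq n A ys)"
  show "Suc t \<le> s"
  proof (rule ccontr)
    assume "\<not> Suc t \<le> s"
    then have "length (take s zs) = s" "set (take s zs) \<subseteq> Zn n"
      using zs(1,2) set_take_subset[of s zs] by auto
    then have "has_wzs_subseq n A (take s zs)"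
      using s by blast
    then show False
      using zs(3) has_wzs_subseq_mono prefix_imp_subseq[OF take_is_prefix] by blast
  qed
qed (use all in blast)

section \<open>Diagonal quadratic forms modulo a prime\<close>

lemma square_cong_imp_eq_half:
  fixes p x y :: int
  assumes "prime p" "x \<in> {0..(p - 1) div 2}" "y \<in> {0..(p - 1) div 2}" "[x^2 = y^2] (mod p)"
  shows "x = y"
proof -
  have "p dvd (x - y) * (x + y)"
    using assms(4) by (simp add: cong_iff_dvd_diff power2_eq_square algebra_simps)
  then consider "p dvd x - y" | "p dvd x + y"
    using assms(1) prime_dvd_mult_iff by blast
  then show ?thesis
  proof cases
    case 1
    have "\<bar>x - y\<bar> < p"
      using assms(2,3) prime_gt_1_int[OF assms(1)] by auto
    with 1 have "\<not> 0 < \<bar>x - y\<bar>"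
      using zdvd_not_zless[of "\<bar>x - y\<bar>" p] by auto
    then show ?thesis by simp
  next
    case 2
    have "x + y < p"
      using assms(2,3) prime_gt_1_int[OF assms(1)] by auto
    with 2 have "\<not> 0 < x + y"
      using zdvd_not_zless[of "x + y" p] by auto
    then show ?thesis
      using assms(2,3) by simp
  qed
qed

lemma exists_square_cong_half:
  fixes p y :: int
  assumes "odd p" "0 < p"
  shows "\<exists>x\<in>{0..(p - 1) div 2}. [x^2 = y^2] (mod p)"
proof -
  define r where "r = y mod p"
  have r: "0 \<le> r" "r < p" "[r^2 = y^2] (mod p)"
    using assms(2) by (simp_all add: r_def cong_def power_mod)
  show ?thesis
  proof (cases "r \<le> (p - 1) div 2")
    case True
    with r show ?thesis by auto
  next
    case False
    have "[(p - r)^2 = r^2] (mod p)"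
      by (simp add: cong_iff_dvd_diff power2_eq_square algebra_simps)
    moreover have "p - r \<in> {0..(p - 1) div 2}"
      using False r assms(1) by (auto elim!: oddE)
    ultimately show ?thesis
      using cong_trans r(3) by blast
  qed
qed

lemma exists_nonresidue:
  fixes p :: int
  assumes "prime p" "p > 2"
  shows "\<exists>a. \<not> QuadRes p a"
proof -
  define K where "K = (p - 1) div 2"
  have odd: "odd p"
    using assms prime_odd_int by blast
  have "card ((\<lambda>x. x^2 mod p) ` {0..K}) \<le> card {0..K}"
    by (rule card_image_le) simp
  also have "\<dots> < card {0..<p}"
    using assms(2) odd by (auto simp: K_def elim!: oddE)
  finally obtain r where r: "r \<in> {0..<p}" "r \<notin> (\<lambda>x. x^2 mod p) ` {0..K}"
    by (metis card_mono finite_imageI finite_atLeastAtMost not_le subsetI)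
  have "\<not> QuadRes p r"
  proof
    assume "QuadRes p r"
    then obtain y where "[y^2 = r] (mod p)"
      unfolding QuadRes_def by blast
    moreover obtain x where "x \<in> {0..K}" "[x^2 = y^2] (mod p)"
      using exists_square_cong_half[OF odd] assms(2) unfolding K_def by fastforce
    ultimately have "x \<in> {0..K}" "x^2 mod p = r"
      using r(1) cong_trans[of "x^2" "y^2" p r] by (auto simp: cong_def)
    with r(2) show False by blast
  qed
  then show ?thesis ..
qed

lemma diagonal_ternary_solvable:
  fixes p a b c :: int
  assumes "prime p" "p > 2" "\<not> p dvd a" "\<not> p dvd b"
  shows "\<exists>x y. p dvd a * x^2 + b * y^2 + c"
proof -
  define K where "K = (p - 1) div 2"
  have p: "p = 2 * K + 1"
    using assms prime_odd_int unfolding K_def by (auto elim!: oddE)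
  have inj: "inj_on (\<lambda>x. (d * x^2 + e) mod p) {0..K}" if "\<not> p dvd d" for d e
  proof (rule inj_onI)
    fix x y assume xy: "x \<in> {0..K}" "y \<in> {0..K}" "(d * x^2 + e) mod p = (d * y^2 + e) mod p"
    then have "[d * x^2 = d * y^2] (mod p)"
      using cong_add_rcancel[of "d * x^2" e "d * y^2" p] by (simp add: cong_def)
    then have "[x^2 = y^2] (mod p)"
      using cong_mult_lcancel prime_imp_coprime[OF assms(1) that] coprime_commute by blast
    then show "x = y"
      using square_cong_imp_eq_half[OF assms(1)] xy(1,2) unfolding K_def by blast
  qed
  define X where "X = (\<lambda>x. (a * x^2) mod p) ` {0..K}"
  define Y where "Y = (\<lambda>y. ((- b) * y^2 + (- c)) mod p) ` {0..K}"
  have "card X = card {0..K}"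
    using card_image[OF inj[OF assms(3), of 0]] by (simp add: X_def)
  moreover have "card Y = card {0..K}"
    using card_image[OF inj[of "- b" "- c"]] assms(4) by (simp add: Y_def)
  moreover have "card (X \<union> Y) \<le> card {0..<p}"
    using assms(2) by (intro card_mono) (auto simp: X_def Y_def)
  ultimately have "X \<inter> Y \<noteq> {}"
    using card_Un_disjoint[of X Y] p assms(2) by (auto simp: X_def Y_def)
  then obtain x y where "(a * x^2) mod p = ((- b) * y^2 + (- c)) mod p"
    unfolding X_def Y_def by blast
  then have "p dvd a * x^2 + b * y^2 + c"
    by (simp add: mod_eq_dvd_iff algebra_simps)
  then show ?thesis by blast
qed

lemma hensel_lift_square:
  fixes p x z R :: int
  assumes "prime p" "p > 2" "\<not> p dvd x" "\<not> p dvd z" "p dvd x^2 * z + R"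
  shows "\<exists>x'. \<not> p dvd x' \<and> p^2 dvd x'^2 * z + R"
proof -
  obtain q where q: "x^2 * z + R = p * q"
    using assms(5) by blast
  have "\<not> p dvd 2"
    using assms(2) zdvd_not_zless[of 2 p] by simp
  then have "\<not> p dvd 2 * x^2 * z"
    using assms(1,3,4) by (simp add: prime_dvd_mult_iff prime_dvd_power_iff)
  then obtain v where v: "[2 * x^2 * z * v = 1] (mod p)"
    using cong_solve_coprime_int prime_imp_coprime[OF assms(1)] coprime_commute by blast
  define t where "t = - q * v"
  have "[2 * x^2 * z * t + q = - q * 1 + q] (mod p)"
    unfolding t_def using v by (intro cong_add cong_refl) (metis cong_scalar_left mult.assoc mult.commute)
  then have "p dvd 2 * x^2 * z * t + q"
    by (simp add: cong_0_iff)
  then have "p^2 dvd p * (2 * x^2 * z * t + q) + p^2 * (t^2 * x^2 * z)"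
    by (simp add: power2_eq_square)
  moreover have "(x * (1 + t * p))^2 * z + R = p * (2 * x^2 * z * t + q) + p^2 * (t^2 * x^2 * z)"
    using q by (simp add: power2_eq_square algebra_simps)
  moreover have "\<not> p dvd x * (1 + t * p)"
    using assms(1-3) by (simp add: prime_dvd_mult_iff dvd_add_left_iff)
  ultimately show ?thesis
    by metis
qed

lemma ternary_units_zero_mod_prime_square:
  fixes p y1 y2 y3 :: int
  assumes "prime p" "p > 2" "\<not> p dvd y1" "\<not> p dvd y2" "\<not> p dvd y3"
  shows "\<exists>x1 x2 x3. \<not> p dvd x3 \<and> p^2 dvd x1^2 * y1 + x2^2 * y2 + x3^2 * y3"
proof -
  obtain x1 x2 where "p dvd y1 * x1^2 + y2 * x2^2 + y3"
    using diagonal_ternary_solvable[OF assms(1-4)] by blast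
  then have "p dvd 1^2 * y3 + (x1^2 * y1 + x2^2 * y2)"
    by (simp add: algebra_simps)
  moreover have "\<not> p dvd 1"
    using assms(1) not_prime_unit by blast
  ultimately obtain x3 where "\<not> p dvd x3" "p^2 dvd x3^2 * y3 + (x1^2 * y1 + x2^2 * y2)"
    using hensel_lift_square[OF assms(1,2) _ assms(5)] by blast
  then show ?thesis
    by (metis add.commute)
qed

lemma ternary_exact_zero_mod_prime_square:
  fixes p y1 y2 y3 :: int
  assumes "prime p" "p > 2" "p dvd y1" "p dvd y2" "p dvd y3" "\<not> p^2 dvd y1" "\<not> p^2 dvd y2"
  shows "\<exists>x1 x2 x3. \<not> p dvd x3 \<and> p^2 dvd x1^2 * y1 + x2^2 * y2 + x3^2 * y3"
proof -
  obtain z1 z2 z3 where z: "y1 = p * z1" "y2 = p * z2" "y3 = p * z3"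
    using assms(3-5) by (meson dvdE)
  have "\<not> p dvd z1" "\<not> p dvd z2"
    using assms(6,7) z by (auto simp: power2_eq_square)
  then obtain x1 x2 where "p dvd z1 * x1^2 + z2 * x2^2 + z3"
    using diagonal_ternary_solvable[OF assms(1,2)] by blast
  then have "p * p dvd p * (z1 * x1^2 + z2 * x2^2 + z3)"
    by simp
  then have "p^2 dvd x1^2 * y1 + x2^2 * y2 + 1^2 * y3"
    using z by (simp add: power2_eq_square algebra_simps)
  moreover have "\<not> p dvd 1"
    using assms(1) not_prime_unit by blast
  ultimately show ?thesis
    by blast
qed

lemma square_weights_of_three:
  fixes p a b c :: int and y :: "nat \<Rightarrow> int"
  assumes "i < N" "j < N" "k < N" "i \<noteq> j" "i \<noteq> k" "j \<noteq> k"
    and "\<not> p dvd c" "p^2 dvd a^2 * y i + b^2 * y j + c^2 * y k"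
  shows "\<exists>x. (\<exists>l<N. \<not> p dvd x l) \<and> p^2 dvd (\<Sum>l<N. (x l)^2 * y l)"
proof -
  define x where "x l = (if l = i then a else if l = j then b else if l = k then c else 0)" for l
  have "(\<Sum>l<N. (x l)^2 * y l) = (\<Sum>l\<in>{i, j, k}. (x l)^2 * y l)"
    using assms(1-3) by (intro sum.mono_neutral_right) (auto simp: x_def)
  also have "\<dots> = a^2 * y i + b^2 * y j + c^2 * y k"
    using assms(4-6) by (simp add: x_def add.assoc)
  finally show ?thesis
    using assms(3,5,6,7,8) by (intro exI[of _ x]) (auto simp: x_def)
qed

lemma three_elements_of_card:
  assumes "3 \<le> card S"
  obtains i j k where "i \<in> S" "j \<in> S" "k \<in> S" "i \<noteq> j" "i \<noteq> k" "j \<noteq> k"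
proof -
  obtain T where "T \<subseteq> S" "card T = 3"
    using obtain_subset_with_card_n[OF assms] by metis
  with that show ?thesis
    by (auto simp: card_3_iff)
qed

lemma square_weights_zero_mod_prime_square:
  fixes p :: int and y :: "nat \<Rightarrow> int"
  assumes "prime p" "p > 2" "5 \<le> N"
  shows "\<exists>x. (\<exists>l<N. \<not> p dvd x l) \<and> p^2 dvd (\<Sum>l<N. (x l)^2 * y l)"
proof (cases "\<exists>i<N. p^2 dvd y i")
  case True
  then obtain i where i: "i < N" "p^2 dvd y i"
    by blast
  define x :: "nat \<Rightarrow> int" where "x l = (if l = i then 1 else 0)" for l
  have "(\<Sum>l<N. (x l)^2 * y l) = (\<Sum>l<N. if l = i then y l else 0)"
    by (rule sum.cong) (simp_all add: x_def)
  also have "\<dots> = y i"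
    using i(1) by simp
  finally have "p^2 dvd (\<Sum>l<N. (x l)^2 * y l)"
    using i(2) by simp
  moreover have "\<not> p dvd x i"
    using assms(1) not_prime_unit unfolding x_def by (metis (full_types))
  ultimately show ?thesis
    using i(1) by blast
next
  case False
  define U where "U = {l\<in>{..<N}. \<not> p dvd y l}"
  define V where "V = {l\<in>{..<N}. p dvd y l}"
  have "U \<union> V = {..<N}" "U \<inter> V = {}"
    by (auto simp: U_def V_def)
  then have "card U + card V = N"
    using card_Un_disjoint[of U V] by (simp add: U_def V_def)
  then consider "3 \<le> card U" | "3 \<le> card V"
    using assms(3) by linarith
  then show ?thesis
  proof cases
    case 1
    then obtain i j k where ijk: "i \<in> U" "j \<in> U" "k \<in> U" "i \<noteq> j" "i \<noteq> k" "j \<noteq> k"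
      by (rule three_elements_of_card)
    then have "\<not> p dvd y i" "\<not> p dvd y j" "\<not> p dvd y k"
      by (simp_all add: U_def)
    then obtain a b c where "\<not> p dvd c" "p^2 dvd a^2 * y i + b^2 * y j + c^2 * y k"
      using ternary_units_zero_mod_prime_square[OF assms(1,2)] by blast
    moreover have "i < N" "j < N" "k < N"
      using ijk by (simp_all add: U_def)
    ultimately show ?thesis
      using ijk(4-6) by (intro square_weights_of_three)
  next
    case 2
    then obtain i j k where ijk: "i \<in> V" "j \<in> V" "k \<in> V" "i \<noteq> j" "i \<noteq> k" "j \<noteq> k"
      by (rule three_elements_of_card)
    then have N: "i < N" "j < N" "k < N" and "p dvd y i" "p dvd y j" "p dvd y k"
      by (simp_all add: V_def)
    moreover have "\<not> p^2 dvd y i" "\<not> p^2 dvd y j"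
      using False N by auto
    ultimately obtain a b c where "\<not> p dvd c" "p^2 dvd a^2 * y i + b^2 * y j + c^2 * y k"
      using ternary_exact_zero_mod_prime_square[OF assms(1,2)] by blast
    with N show ?thesis
      using ijk(4-6) by (intro square_weights_of_three)
  qed
qed

section \<open>The upper bound\<close>

lemma zero_notin_sq_set_star: "0 \<notin> sq_set_star n"
  by (simp add: sq_set_star_def)

lemma square_mod_in_sq_set:
  assumes "n > 0"
  shows "x^2 mod int n \<in> sq_set n"
proof -
  have "(x mod int n)^2 mod int n = x^2 mod int n"
    by (simp add: power_mod)
  moreover have "x mod int n \<in> Zn n"
    using assms by (simp add: Zn_def)
  ultimately show ?thesis
    unfolding sq_set_def mem_Collect_eq by metis
qed

lemma square_modulus_has_wzs_subseq:
  fixes m :: nat and ys :: "int list"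
  assumes "odd m" "m > 1" "5 \<le> length ys"
  shows "has_wzs_subseq (m^2) (sq_set_star (m^2)) ys"
proof -
  obtain p where p: "prime p" "p dvd m"
    using prime_factor_nat[of m] assms(2) by auto
  have "p \<noteq> 2"
    using assms(1) p(2) by auto
  then have P: "prime (int p)" "int p > 2"
    using p(1) prime_ge_2_nat[of p] by auto
  obtain k where m: "m = p * k"
    using p(2) by (elim dvdE)
  define M where "M = int k"
  define N where "N = int (m^2)"
  have N: "N = (int p)^2 * M^2" and "M \<noteq> 0"
    using m assms(2) by (auto simp: N_def M_def power_mult_distrib intro: gr0I)
  obtain x i where i: "i < length ys" "\<not> int p dvd x i"
    and dvd: "(int p)^2 dvd (\<Sum>l<length ys. (x l)^2 * ys ! l)"
    using square_weights_zero_mod_prime_square[OF P assms(3)] by blast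
  define b where "b l = (M * x l)^2 mod N" for l
  have weights: "b l \<in> insert 0 (sq_set_star (m^2))" for l
    using square_mod_in_sq_set[of "m^2"] assms(2) by (simp add: b_def N_def sq_set_star_def)
  have nonzero: "b i \<noteq> 0"
  proof
    assume "b i = 0"
    then have "M^2 * (int p)^2 dvd M^2 * (x i)^2"
      using N by (simp add: b_def dvd_eq_mod_eq_0 power_mult_distrib mult.commute)
    then show False
      using i(2) \<open>M \<noteq> 0\<close> by (simp add: dvd_power_iff)
  qed
  have zero_sum: "(\<Sum>l<length ys. b l * ys ! l) mod N = 0"
  proof -
    have "[(\<Sum>l<length ys. b l * ys ! l) = (\<Sum>l<length ys. (M * x l)^2 * ys ! l)] (mod N)"
      by (rule cong_sum) (simp add: b_def cong_def mod_mult_left_eq)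
    moreover have "(\<Sum>l<length ys. (M * x l)^2 * ys ! l) = M^2 * (\<Sum>l<length ys. (x l)^2 * ys ! l)"
      by (simp add: sum_distrib_left power_mult_distrib algebra_simps)
    moreover have "N dvd M^2 * (\<Sum>l<length ys. (x l)^2 * ys ! l)"
      using dvd N by (simp add: mult.commute mult_dvd_mono)
    ultimately show ?thesis
      by (simp add: cong_def)
  qed
  show ?thesis
    unfolding has_wzs_subseq_iff_weights[OF zero_notin_sq_set_star]
  proof (intro exI[of _ b] conjI allI impI)
    show "\<exists>i<length ys. b i \<noteq> 0"
      using i(1) nonzero by auto
  qed (use weights zero_sum N_def in auto)
qed

section \<open>An anisotropic quaternary form\<close>

lemma QuadRes_cong:
  assumes "[a = b] (mod p)"
  shows "QuadRes p a \<longleftrightarrow> QuadRes p b"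
proof -
  have "[y^2 = a] (mod p) \<longleftrightarrow> [y^2 = b] (mod p)" for y
    using assms cong_trans cong_sym by meson
  then show ?thesis
    unfolding QuadRes_def by simp
qed

lemma prime_dvd_binary_form:
  fixes P a b c :: int
  assumes "prime P" "\<not> QuadRes P (- c)" "P dvd a^2 + c * b^2"
  shows "P dvd a \<and> P dvd b"
proof -
  have "P dvd b"
  proof (rule ccontr)
    assume "\<not> P dvd b"
    then obtain b' where b': "[b * b' = 1] (mod P)"
      using cong_solve_coprime_int prime_imp_coprime[OF assms(1)] coprime_commute by blast
    have "(a * b')^2 + c * (b * b')^2 = (a^2 + c * b^2) * b'^2"
      by (simp add: power2_eq_square algebra_simps)
    then have "P dvd (a * b')^2 + c * (b * b')^2"
      using assms(3) by simp
    moreover have "P dvd c * ((b * b')^2 - 1)"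
      using cong_pow[OF b', of 2] by (simp add: cong_iff_dvd_diff)
    ultimately have "P dvd ((a * b')^2 + c * (b * b')^2) - c * ((b * b')^2 - 1)"
      by (rule dvd_diff)
    then have "P dvd (a * b')^2 + c"
      by (simp add: algebra_simps)
    then have "[(a * b')^2 = - c] (mod P)"
      by (simp add: cong_iff_dvd_diff)
    with assms(2) show False
      unfolding QuadRes_def by blast
  qed
  then have "P dvd a^2"
    using assms(3) by (simp add: dvd_add_left_iff power2_eq_square)
  with \<open>P dvd b\<close> show ?thesis
    using assms(1) prime_dvd_power by blast
qed

lemma anisotropic_step:
  fixes P C R x1 x2 x3 x4 :: int
  assumes "prime P" "\<not> QuadRes P (- C)" "[R = P] (mod P^2)"
    and "P^2 dvd (x1^2 + C * x2^2) + R * (x3^2 + C * x4^2)"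
  shows "P dvd x1 \<and> P dvd x2 \<and> P dvd x3 \<and> P dvd x4"
proof -
  define Q where "Q = x3^2 + C * x4^2"
  obtain k where "R - P = P^2 * k"
    using assms(3) by (auto simp: cong_iff_dvd_diff elim!: dvdE)
  then have R: "R = P * ((1 + P * k))"
    by (simp add: power2_eq_square algebra_simps)
  have "P dvd (x1^2 + C * x2^2) + R * Q"
    using assms(4) unfolding Q_def by (rule dvd_trans[rotated]) (simp add: power2_eq_square)
  moreover have "P dvd R * Q"
    using R by simp
  ultimately have "P dvd x1^2 + C * x2^2"
    by (simp add: dvd_add_left_iff)
  then have 12: "P dvd x1 \<and> P dvd x2"
    using prime_dvd_binary_form[OF assms(1,2)] by blast
  then obtain u v where "x1 = P * u" "x2 = P * v"
    by (meson dvdE)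
  then have "P * P dvd x1^2 + C * x2^2"
    by (simp add: power2_eq_square algebra_simps)
  then have "P * P dvd R * Q"
    using assms(4) unfolding Q_def power2_eq_square[of P] by (simp add: dvd_add_right_iff)
  then have "P dvd (1 + P * k) * Q"
    using assms(1) R by (simp add: mult.assoc)
  moreover have "\<not> P dvd 1 + P * k"
    using assms(1) not_prime_unit dvd_add_left_iff[of P "P * k" 1] by auto
  ultimately have "P dvd x3^2 + C * x4^2"
    using assms(1) prime_dvd_mult_iff unfolding Q_def by blast
  with 12 show ?thesis
    using prime_dvd_binary_form[OF assms(1,2)] by blast
qed

lemma anisotropic_descent:
  fixes m :: nat and C R x1 x2 x3 x4 :: int
  assumes "m > 0"
    and "\<And>p. prime p \<Longrightarrow> p dvd m \<Longrightarrow> \<not> QuadRes (int p) (- C) \<and> [R = int p] (mod (int p)^2)"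
    and "(int m)^2 dvd (x1^2 + C * x2^2) + R * (x3^2 + C * x4^2)"
  shows "int m dvd x1 \<and> int m dvd x2 \<and> int m dvd x3 \<and> int m dvd x4"
  using assms
proof (induction m arbitrary: x1 x2 x3 x4 rule: less_induct)
  case (less m)
  show ?case
  proof (cases "m = 1")
    case False
    then obtain p where p: "prime p" "p dvd m"
      using prime_factor_nat by blast
    then obtain k where m: "m = p * k"
      by (elim dvdE)
    have P: "prime (int p)" "int p dvd int m"
      using p by simp_all
    have "(int p)^2 dvd (int m)^2"
      using P(2) by (rule dvd_power_same)
    then have "(int p)^2 dvd (x1^2 + C * x2^2) + R * (x3^2 + C * x4^2)"
      using less.prems(3) by (rule dvd_trans)
    then have "int p dvd x1 \<and> int p dvd x2 \<and> int p dvd x3 \<and> int p dvd x4"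
      using anisotropic_step[OF P(1)] less.prems(2)[OF p] by blast
    then obtain u1 u2 u3 u4 where u: "x1 = int p * u1" "x2 = int p * u2" "x3 = int p * u3" "x4 = int p * u4"
      by (meson dvdE)
    have "(int p)^2 * (int k)^2 dvd (int p)^2 * ((u1^2 + C * u2^2) + R * (u3^2 + C * u4^2))"
      using less.prems(3) u m by (simp add: power_mult_distrib algebra_simps)
    then have "(int k)^2 dvd (u1^2 + C * u2^2) + R * (u3^2 + C * u4^2)"
      using p(1) by simp
    moreover have "k < m" "0 < k"
      using less.prems(1) m prime_gt_1_nat[OF p(1)] by auto
    moreover have "\<not> QuadRes (int q) (- C) \<and> [R = int q] (mod (int q)^2)"
      if "prime q" "q dvd k" for q
      using that less.prems(2) m by (simp add: dvd_mult)
    ultimately have "int k dvd u1 \<and> int k dvd u2 \<and> int k dvd u3 \<and> int k dvd u4"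
      using less.IH by blast
    then show ?thesis
      using u m by (simp add: mult_dvd_mono)
  qed simp
qed

lemma chinese_remainder_int:
  fixes A :: "'a set" and m :: "'a \<Rightarrow> nat" and u :: "'a \<Rightarrow> int"
  assumes "finite A" "\<forall>i\<in>A. \<forall>j\<in>A. i \<noteq> j \<longrightarrow> coprime (m i) (m j)" "\<forall>i\<in>A. m i > 0"
  shows "\<exists>x :: int. \<forall>i\<in>A. [x = u i] (mod int (m i))"
proof -
  obtain x where x: "\<forall>i\<in>A. [x = nat (u i mod int (m i))] (mod m i)"
    using chinese_remainder_nat[OF assms(1,2), of "\<lambda>i. nat (u i mod int (m i))"] by blast
  have "[int x = u i] (mod int (m i))" if "i \<in> A" for i
  proof -
    have "[int x = int (nat (u i mod int (m i)))] (mod int (m i))"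
      using x that cong_int_iff by blast
    then show ?thesis
      using assms(3) that by (simp add: cong_def)
  qed
  then show ?thesis
    by blast
qed

lemma exists_anisotropic_coefficients:
  fixes m :: nat
  assumes "odd m"
  shows "\<exists>C R :: int. \<forall>p. prime p \<longrightarrow> p dvd m \<longrightarrow>
    \<not> QuadRes (int p) (- C) \<and> [R = int p] (mod (int p)^2)"
proof -
  define F where "F = prime_factors m"
  have F: "p \<in> F \<longleftrightarrow> prime p \<and> p dvd m" for p
    using assms by (auto simp: F_def in_prime_factors_iff intro: gr0I)
  have cop: "\<forall>p\<in>F. \<forall>q\<in>F. p \<noteq> q \<longrightarrow> coprime p q"
    "\<forall>p\<in>F. \<forall>q\<in>F. p \<noteq> q \<longrightarrow> coprime (p^2) (q^2)"
    by (auto simp: F intro: primes_coprime)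
  have pos: "\<forall>p\<in>F. p > 0" "\<forall>p\<in>F. p^2 > 0"
    by (auto simp: F prime_gt_0_nat)
  define a where "a p = (SOME a. \<not> QuadRes (int p) a)" for p
  have a: "\<not> QuadRes (int p) (a p)" if "p \<in> F" for p
  proof -
    have "p \<noteq> 2"
      using that assms by (auto simp: F)
    then have "\<exists>x. \<not> QuadRes (int p) x"
      using exists_nonresidue that prime_ge_2_nat[of p] by (simp add: F)
    then show ?thesis
      unfolding a_def by (rule someI_ex)
  qed
  obtain C where C: "\<forall>p\<in>F. [C = - a p] (mod int p)"
    using chinese_remainder_int[OF _ cop(1) pos(1), of "\<lambda>p. - a p"] by (auto simp: F_def)
  obtain R where R: "\<forall>p\<in>F. [R = int p] (mod int (p^2))"
    using chinese_remainder_int[OF _ cop(2) pos(2), of int] by (auto simp: F_def)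
  have "\<not> QuadRes (int p) (- C) \<and> [R = int p] (mod (int p)^2)" if "prime p" "p dvd m" for p
  proof
    have p: "p \<in> F"
      using that by (simp add: F)
    then have "[C = - a p] (mod int p)"
      using C by blast
    then have "[- C = a p] (mod int p)"
      using cong_minus_minus_iff[of C "- a p" "int p"] by simp
    then show "\<not> QuadRes (int p) (- C)"
      using a[OF p] QuadRes_cong by blast
    show "[R = int p] (mod (int p)^2)"
      using R p by simp
  qed
  then show ?thesis
    by blast
qed

lemma anisotropic_square_weights:
  fixes m :: nat and C R :: int and x :: "nat \<Rightarrow> int"
  assumes "m > 0"
    and "\<And>p. prime p \<Longrightarrow> p dvd m \<Longrightarrow> \<not> QuadRes (int p) (- C) \<and> [R = int p] (mod (int p)^2)"
    and "(int m)^2 dvd (\<Sum>l<4. (x l)^2 * [1, C, R, R * C] ! l)"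
    and "l < 4"
  shows "int m dvd x l"
proof -
  have "(\<Sum>l<4. (x l)^2 * [1, C, R, R * C] ! l) = ((x 0)^2 + C * (x 1)^2) + R * ((x 2)^2 + C * (x 3)^2)"
    by (simp add: eval_nat_numeral algebra_simps)
  then have "(int m)^2 dvd ((x 0)^2 + C * (x 1)^2) + R * ((x 2)^2 + C * (x 3)^2)"
    using assms(3) by simp
  then have "int m dvd x 0 \<and> int m dvd x 1 \<and> int m dvd x 2 \<and> int m dvd x 3"
    using anisotropic_descent[OF assms(1,2)] by blast
  moreover have "l = 0 \<or> l = 1 \<or> l = 2 \<or> l = 3"
    using assms(4) by auto
  ultimately show ?thesis
    by auto
qed

lemma insert_zero_sq_set_star_square:
  assumes "b \<in> insert 0 (sq_set_star n)"
  shows "\<exists>x. b = x^2 mod int n"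
proof (cases "b = 0")
  case True
  then show ?thesis
    by (intro exI[of _ 0]) simp
next
  case False
  then show ?thesis
    using assms by (auto simp: sq_set_star_def sq_set_def)
qed

lemma square_modulus_exists_wzs_free:
  fixes m :: nat
  assumes "odd m"
  shows "\<exists>ys. length ys = 4 \<and> set ys \<subseteq> Zn (m^2) \<and> \<not> has_wzs_subseq (m^2) (sq_set_star (m^2)) ys"
proof -
  obtain C R where CR: "\<And>p. prime p \<Longrightarrow> p dvd m \<Longrightarrow> \<not> QuadRes (int p) (- C) \<and> [R = int p] (mod (int p)^2)"
    using exists_anisotropic_coefficients[OF assms] by blast
  have "m > 0"
    using assms by (auto intro: gr0I)
  define N where "N = int (m^2)"
  define zs where "zs = [1, C, R, R * C]"
  define ys where "ys = map (\<lambda>y. y mod N) zs"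
  have "\<not> has_wzs_subseq (m^2) (sq_set_star (m^2)) ys"
  proof
    assume "has_wzs_subseq (m^2) (sq_set_star (m^2)) ys"
    moreover have "length ys = 4"
      by (simp add: ys_def zs_def)
    ultimately obtain b i where b: "\<forall>l<4. b l \<in> insert 0 (sq_set_star (m^2))" and i: "i < 4" "b i \<noteq> 0"
      and sum: "(\<Sum>l<4. b l * ys ! l) mod N = 0"
      unfolding has_wzs_subseq_iff_weights[OF zero_notin_sq_set_star] N_def by metis
    have "\<exists>x. l < 4 \<longrightarrow> b l = x^2 mod N" for l
      using insert_zero_sq_set_star_square b unfolding N_def by blast
    then obtain x where x: "\<And>l. l < 4 \<Longrightarrow> b l = (x l)^2 mod N"
      by metis
    have "[(\<Sum>l<4. b l * ys ! l) = (\<Sum>l<4. (x l)^2 * zs ! l)] (mod N)"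
    proof (rule cong_sum)
      fix l assume "l \<in> {..<4::nat}"
      then have "ys ! l = zs ! l mod N"
        unfolding ys_def by (intro nth_map) (simp add: zs_def)
      with x \<open>l \<in> {..<4}\<close> show "[b l * ys ! l = (x l)^2 * zs ! l] (mod N)"
        by (simp add: cong_def mod_mult_eq)
    qed
    with sum have "(int m)^2 dvd (\<Sum>l<4. (x l)^2 * [1, C, R, R * C] ! l)"
      by (simp add: N_def zs_def cong_def dvd_eq_mod_eq_0)
    then have "int m dvd x i"
      using anisotropic_square_weights[OF \<open>m > 0\<close> CR _ i(1)] by blast
    then have "b i = 0"
      using x i(1) by (simp add: N_def dvd_eq_mod_eq_0[symmetric] power_mult_distrib)
    with i(2) show False ..
  qed
  moreover have "set ys \<subseteq> Zn (m^2)"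
    using \<open>m > 0\<close> by (auto simp: ys_def Zn_def N_def)
  ultimately show ?thesis
    by (intro exI[of _ ys]) (simp add: ys_def zs_def)
qed

theorem mainTheorem15:
  fixes n :: nat
  assumes "n > 1" and "odd n" and "\<exists>m. n = m^2"
  shows "weighted_davenport n (sq_set_star n) = 5"
proof -
  obtain m where n: "n = m^2"
    using assms(3) by blast
  have "m \<noteq> 0" "m \<noteq> 1"
    using assms(1) n by (auto intro: gr0I)
  then have m: "odd m" "m > 1"
    using assms(2) n by auto
  obtain zs where "length zs = 4" "set zs \<subseteq> Zn n" "\<not> has_wzs_subseq n (sq_set_star n) zs"
    using square_modulus_exists_wzs_free[OF m(1)] n by blast
  moreover have "\<forall>ys. length ys = Suc 4 \<and> set ys \<subseteq> Zn n \<longrightarrow> has_wzs_subseq n (sq_set_star n) ys"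
    using square_modulus_has_wzs_subseq[OF m] n by simp
  ultimately have "weighted_davenport n (sq_set_star n) = Suc 4"
    by (intro weighted_davenport_eqI)
  then show ?thesis
    by simp
qed

end
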